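(* Let $\alpha>0$, $h>0$, let $(Y_k)_{k\ge0}$ be i.i.d. random variables with $\mathbb{E}[Y_1]=0$, $\mathbb{E}[Y_1^2]=1$, let $B^h_t=\sqrt{h}\sum_{k=0}^{\lfloor t/h\rfloor}Y_k$, and let $X^h_{0-}$ be a real-valued random variable independent of $(Y_k)$ whose law is atomless. Define, for increasing $\ell$, $X^h_t[\ell]=X^h_{0-}+B^h_t-\alpha\ell_{h\lfloor t/h\rfloor}$, $\tau^h[\ell]=\inf\{t\ge0:X^h_t[\ell]\le0\}$ and $\Gamma_h[\ell]_t=\mathbb{P}(\tau^h[\ell]\le t)$. Let $\underline{\Lambda}^h$ be the minimal solution of the Donsker problem with initial condition $X^h_{0-}$ (see context). Then $\underline{\Lambda}^h=\alpha\lim_{k\to\infty}\Gamma_h^{(k)}[0]$, where $\Gamma_h^{(k)}$ is the $k$-fold iterate of $\Gamma_h$, $0$ denotes the zero function, and the limit is understood in $M$.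
   Context: Donsker problem: a deterministic function $\Lambda^h$ is a solution if, with $X^h_t=X^h_{0-}+B^h_t-\Lambda^h_t$ and $\tau^h=\inf\{t\ge0:X^h_t\le0\}$, one has $\Lambda^h_t=\alpha\,\mathbb{P}(\tau^h\le t)$ for all $t\ge0$; a solution $\underline{\Lambda}^h$ is minimal if $\underline{\Lambda}^h\le\Lambda^h$ for every solution $\Lambda^h$. $M$ is the set of càdlàg increasing functions $\ell:\overline{\mathbb{R}}\to[0,1]$ with $\ell_{0-}=0$, $\ell_\infty=1$, with $\ell^n\to\ell$ iff $\ell^n_t\to\ell_t$ at all $t\in[0,\infty]$ where $\ell$ is continuous. *)

theory Defs
  imports "HOL-Probability.Probability"
begin

definition Bh :: "real \<Rightarrow> (nat \<Rightarrow> 'a \<Rightarrow> real) \<Rightarrow> real \<Rightarrow> 'a \<Rightarrow> real" where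
  "Bh h Y t \<omega> = sqrt h * (\<Sum>k\<le>nat \<lfloor>t / h\<rfloor>. Y k \<omega>)"

definition hit_time :: "(real \<Rightarrow> 'a \<Rightarrow> real) \<Rightarrow> 'a \<Rightarrow> ereal" where
  "hit_time X \<omega> = Inf {ereal s | s. 0 \<le> s \<and> X s \<omega> \<le> 0}"

definition donsker_solution ::
  "'a measure \<Rightarrow> real \<Rightarrow> real \<Rightarrow> ('a \<Rightarrow> real) \<Rightarrow> (nat \<Rightarrow> 'a \<Rightarrow> real) \<Rightarrow> (real \<Rightarrow> real) \<Rightarrow> bool" where
  "donsker_solution M h \<alpha> X0 Y \<Lambda> \<longleftrightarrow>
     (\<forall>t\<ge>0. \<Lambda> t = \<alpha> * measure M {\<omega> \<in> space M.
        hit_time (\<lambda>s \<omega>. X0 \<omega> + Bh h Y s \<omega> - \<Lambda> s) \<omega> \<le> ereal t})"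

definition minimal_donsker_solution ::
  "'a measure \<Rightarrow> real \<Rightarrow> real \<Rightarrow> ('a \<Rightarrow> real) \<Rightarrow> (nat \<Rightarrow> 'a \<Rightarrow> real) \<Rightarrow> (real \<Rightarrow> real) \<Rightarrow> bool" where
  "minimal_donsker_solution M h \<alpha> X0 Y \<Lambda> \<longleftrightarrow>
     donsker_solution M h \<alpha> X0 Y \<Lambda> \<and>
     (\<forall>\<Lambda>'. donsker_solution M h \<alpha> X0 Y \<Lambda>' \<longrightarrow> (\<forall>t\<ge>0. \<Lambda> t \<le> \<Lambda>' t))"

text \<open>Gamma_h[l]_t = P(tau^h[l] <= t) for t in [0,infinity), extended to the extended reals
  as an element of M (0 for t < 0, 1 at infinity).\<close>
definition Gamma_h ::
  "'a measure \<Rightarrow> real \<Rightarrow> real \<Rightarrow> ('a \<Rightarrow> real) \<Rightarrow> (nat \<Rightarrow> 'a \<Rightarrow> real) \<Rightarrow> (ereal \<Rightarrow> real) \<Rightarrow> ereal \<Rightarrow> real" where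
  "Gamma_h M h \<alpha> X0 Y l t =
     (if t < 0 then 0 else if t = \<infinity> then 1 else
      measure M {\<omega> \<in> space M.
        hit_time (\<lambda>s \<omega>. X0 \<omega> + Bh h Y s \<omega> - \<alpha> * l (ereal (h * of_int \<lfloor>s / h\<rfloor>))) \<omega> \<le> t})"

text \<open>The space M: cadlag increasing l : [-infinity,infinity] -> [0,1], l = 0 on negative times
  (so l_{0-} = 0) and l_infinity = 1.\<close>
definition in_M :: "(ereal \<Rightarrow> real) \<Rightarrow> bool" where
  "in_M l \<longleftrightarrow> mono l \<and> (\<forall>t. 0 \<le> l t \<and> l t \<le> 1) \<and> (\<forall>t<0. l t = 0) \<and> l \<infinity> = 1 \<and>
     (\<forall>t. continuous (at_right t) l)"

definition conv_M :: "(nat \<Rightarrow> ereal \<Rightarrow> real) \<Rightarrow> (ereal \<Rightarrow> real) \<Rightarrow> bool" where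
  "conv_M ls l \<longleftrightarrow> (\<forall>t\<ge>0. isCont l t \<longrightarrow> (\<lambda>n. ls n t) \<longlonglongrightarrow> l t)"

end

theory Submission
  imports Defs
begin

text \<open>
  On the grid the hitting event of the barrier \<open>\<alpha> l(h\<lfloor>s/h\<rfloor>)\<close> by time t is the event that
  \<open>X0 + sqrt h (Y 0 + ... + Y j) \<le> \<alpha> l(h j)\<close> for some \<open>j \<le> \<lfloor>t/h\<rfloor>\<close>. Hence \<open>\<Gamma>\<^sub>h\<close> is monotone
  in l and every \<open>\<Gamma>\<^sub>h[l]\<close> is a cadlag step function, so the iterates \<open>\<Gamma>\<^sub>h\<^sup>k[0]\<close> increase to a
  limit L. Since the walk started at X0 has no atoms, the events with strict inequality exhaust
  the limiting event up to a null set, so \<open>\<Gamma>\<^sub>h\<close> is continuous along increasing sequences and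
  \<open>\<Gamma>\<^sub>h[L] = L\<close>. Then \<open>\<alpha> L\<close>, sampled on the grid, solves the Donsker problem, and minimality gives
  \<open>\<Lambda> \<le> \<alpha> L\<close>. Conversely \<open>\<Gamma>\<^sub>h\<close> maps barriers below a solution \<open>\<Lambda>\<close> to barriers below \<open>\<Lambda>\<close>,
  so \<open>\<alpha> \<Gamma>\<^sub>h\<^sup>k[0] \<le> \<Lambda>\<close> for every k.
\<close>

definition walk :: "real \<Rightarrow> (nat \<Rightarrow> 'a \<Rightarrow> real) \<Rightarrow> nat \<Rightarrow> 'a \<Rightarrow> real" where
  "walk h Y k \<omega> = sqrt h * (\<Sum>j\<le>k. Y j \<omega>)"

lemma Bh_eq_walk: "Bh h Y s \<omega> = walk h Y (nat \<lfloor>s / h\<rfloor>) \<omega>"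
  by (simp add: Bh_def walk_def)

lemma grid_le_iff:
  fixes h t :: real
  assumes "0 < h" and "0 \<le> t"
  shows "h * real j \<le> t \<longleftrightarrow> j \<le> nat \<lfloor>t / h\<rfloor>"
proof -
  have "h * real j \<le> t \<longleftrightarrow> real_of_int (int j) \<le> t / h"
    using assms(1) by (simp add: field_simps)
  also have "\<dots> \<longleftrightarrow> int j \<le> \<lfloor>t / h\<rfloor>"
    by (rule le_floor_iff[symmetric])
  also have "\<dots> \<longleftrightarrow> j \<le> nat \<lfloor>t / h\<rfloor>"
    using assms by (simp add: le_nat_iff)
  finally show ?thesis .
qed

lemma hit_time_le:
  assumes "0 \<le> s" and "X s \<omega> \<le> 0"
  shows "hit_time X \<omega> \<le> ereal s"
  unfolding hit_time_def using assms by (auto intro: Inf_lower)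

lemma hit_time_le_iff:
  "hit_time X \<omega> \<le> ereal t \<longleftrightarrow>
     (\<forall>n::nat. \<exists>s. 0 \<le> s \<and> s < t + 1 / real (Suc n) \<and> X s \<omega> \<le> 0)"
proof
  assume "hit_time X \<omega> \<le> ereal t"
  then show "\<forall>n. \<exists>s. 0 \<le> s \<and> s < t + 1 / real (Suc n) \<and> X s \<omega> \<le> 0"
    unfolding hit_time_def Inf_le_iff by (force dest: spec[of _ "ereal (t + 1 / real (Suc _))"])
next
  assume approx: "\<forall>n. \<exists>s. 0 \<le> s \<and> s < t + 1 / real (Suc n) \<and> X s \<omega> \<le> 0"
  show "hit_time X \<omega> \<le> ereal t"
    unfolding hit_time_def Inf_le_iff
  proof (intro allI impI)
    fix y assume "ereal t < y"
    then obtain n :: nat where n: "ereal (t + 1 / real (Suc n)) \<le> y"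
    proof (cases y)
      case (real r)
      with \<open>ereal t < y\<close> have "0 < r - t" by simp
      then obtain n where "inverse (real (Suc n)) < r - t"
        using reals_Archimedean by blast
      with real that[of n] show ?thesis by (simp add: field_simps)
    qed (use that \<open>ereal t < y\<close> in auto)
    from approx obtain s where s: "0 \<le> s" "s < t + 1 / real (Suc n)" "X s \<omega> \<le> 0" by blast
    have "ereal s < y" by (rule less_le_trans[OF _ n]) (use s(2) in simp)
    with s show "\<exists>x\<in>{ereal s |s. 0 \<le> s \<and> X s \<omega> \<le> 0}. x < y" by blast
  qed
qed

lemma hit_time_grid_iff:
  fixes h t :: real
  assumes h: "0 < h" and t: "0 \<le> t" and barrier: "\<And>s. 0 \<le> s \<Longrightarrow> \<phi> s = \<psi> (nat \<lfloor>s / h\<rfloor>)"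
  shows "hit_time (\<lambda>s \<omega>. X0 \<omega> + Bh h Y s \<omega> - \<phi> s) \<omega> \<le> ereal t \<longleftrightarrow>
         (\<exists>j\<le>nat \<lfloor>t / h\<rfloor>. X0 \<omega> + walk h Y j \<omega> \<le> \<psi> j)"
proof
  define N where "N = nat \<lfloor>t / h\<rfloor>"
  assume hit: "hit_time (\<lambda>s \<omega>. X0 \<omega> + Bh h Y s \<omega> - \<phi> s) \<omega> \<le> ereal t"
  show "\<exists>j\<le>N. X0 \<omega> + walk h Y j \<omega> \<le> \<psi> j"
  proof (rule ccontr)
    assume none: "\<not> (\<exists>j\<le>N. X0 \<omega> + walk h Y j \<omega> \<le> \<psi> j)"
    have "ereal (h * real (Suc N)) \<le> hit_time (\<lambda>s \<omega>. X0 \<omega> + Bh h Y s \<omega> - \<phi> s) \<omega>"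
      unfolding hit_time_def
    proof (rule Inf_greatest)
      fix x assume "x \<in> {ereal s |s. 0 \<le> s \<and> X0 \<omega> + Bh h Y s \<omega> - \<phi> s \<le> 0}"
      then obtain s where s: "x = ereal s" "0 \<le> s"
        and "X0 \<omega> + walk h Y (nat \<lfloor>s / h\<rfloor>) \<omega> \<le> \<psi> (nat \<lfloor>s / h\<rfloor>)"
        using barrier by (auto simp: Bh_eq_walk)
      with none have "Suc N \<le> nat \<lfloor>s / h\<rfloor>" by (meson not_less_eq_eq)
      with s show "ereal (h * real (Suc N)) \<le> x" using grid_le_iff[OF h s(2), of "Suc N"] by simp
    qed
    moreover have "t < h * real (Suc N)"
      using grid_le_iff[OF h t, of "Suc N"] by (simp add: N_def)
    ultimately show False using hit by (meson ereal_less_eq(3) not_le order_trans)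
  qed
next
  assume "\<exists>j\<le>nat \<lfloor>t / h\<rfloor>. X0 \<omega> + walk h Y j \<omega> \<le> \<psi> j"
  then obtain j where j: "j \<le> nat \<lfloor>t / h\<rfloor>" "X0 \<omega> + walk h Y j \<omega> \<le> \<psi> j" by blast
  have "hit_time (\<lambda>s \<omega>. X0 \<omega> + Bh h Y s \<omega> - \<phi> s) \<omega> \<le> ereal (h * real j)"
    using h j(2) barrier[of "h * real j"] by (intro hit_time_le) (auto simp: Bh_eq_walk)
  also have "\<dots> \<le> ereal t" using grid_le_iff[OF h t] j(1) by simp
  finally show "hit_time (\<lambda>s \<omega>. X0 \<omega> + Bh h Y s \<omega> - \<phi> s) \<omega> \<le> ereal t" .
qed

lemma (in prob_space) indep_var_add_atomless:
  fixes X T :: "'a \<Rightarrow> real"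
  assumes indep: "indep_var borel X borel T" and atomless: "\<And>x. prob {\<omega> \<in> space M. X \<omega> = x} = 0"
  shows "prob {\<omega> \<in> space M. X \<omega> + T \<omega> = c} = 0"
proof -
  have X: "X \<in> borel_measurable M" and T: "T \<in> borel_measurable M"
    using indep_var_rv1[OF indep] indep_var_rv2[OF indep] by auto
  interpret DX: prob_space "distr M borel X" by (rule prob_space_distr) (use X in simp)
  interpret DT: prob_space "distr M borel T" by (rule prob_space_distr) (use T in simp)
  interpret P: pair_prob_space "distr M borel X" "distr M borel T" ..
  define A where "A = {p \<in> space (borel \<Otimes>\<^sub>M borel). fst p + snd p = (c::real)}"
  have A: "A \<in> sets (borel \<Otimes>\<^sub>M borel)" unfolding A_def by measurable
  have "emeasure M {\<omega> \<in> space M. X \<omega> + T \<omega> = c} = emeasure M ((\<lambda>\<omega>. (X \<omega>, T \<omega>)) -` A \<inter> space M)"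
    by (rule arg_cong[where f = "emeasure M"]) (auto simp: A_def space_pair_measure)
  also have "\<dots> = emeasure (distr M borel X \<Otimes>\<^sub>M distr M borel T) A"
    using indep X T A by (simp add: indep_var_distribution_eq emeasure_distr)
  also have "\<dots> = (\<integral>\<^sup>+y. emeasure (distr M borel X) ((\<lambda>x. (x, y)) -` A) \<partial>distr M borel T)"
    by (rule P.emeasure_pair_measure_alt2) (simp add: A)
  also have "\<dots> = (\<integral>\<^sup>+y. 0 \<partial>distr M borel T)"
  proof (rule nn_integral_cong)
    fix y
    have "(\<lambda>x. (x, y)) -` A = {c - y}" by (auto simp: A_def space_pair_measure)
    moreover have "X -` {c - y} \<inter> space M = {\<omega> \<in> space M. X \<omega> = c - y}" by auto
    ultimately show "emeasure (distr M borel X) ((\<lambda>x. (x, y)) -` A) = 0"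
      using X atomless by (simp add: emeasure_distr emeasure_eq_measure)
  qed
  finally show ?thesis by (simp add: measure_def)
qed

lemma ereal_nonneg_cases:
  fixes t :: ereal
  obtains "t < 0" | "t = \<infinity>" | r where "t = ereal r" "0 \<le> r"
  by (cases t) force+

locale donsker_grid = prob_space M for M :: "'a measure" +
  fixes h \<alpha> :: real and X0 :: "'a \<Rightarrow> real" and Y :: "nat \<Rightarrow> 'a \<Rightarrow> real"
  assumes h_pos: "0 < h" and \<alpha>_nonneg: "0 \<le> \<alpha>"
    and X0_measurable[measurable]: "X0 \<in> borel_measurable M"
    and Y_measurable[measurable]: "\<And>k. Y k \<in> borel_measurable M"
begin

abbreviation \<Gamma> :: "(ereal \<Rightarrow> real) \<Rightarrow> ereal \<Rightarrow> real" where
  "\<Gamma> \<equiv> Gamma_h M h \<alpha> X0 Y"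

lemma walk_measurable[measurable]: "walk h Y k \<in> borel_measurable M"
  unfolding walk_def[abs_def] by measurable

lemma hit_event_measurable:
  "{\<omega> \<in> space M. hit_time (\<lambda>s \<omega>. X0 \<omega> + Bh h Y s \<omega> - \<phi> s) \<omega> \<le> ereal t} \<in> sets M"
proof -
  \<comment> \<open>No regularity of \<open>\<phi>\<close> is needed: each \<open>D n k\<close> is down-closed, hence an interval.\<close>
  define D where "D n k = {x. \<exists>s. 0 \<le> s \<and> s < t + 1 / real (Suc n) \<and> nat \<lfloor>s / h\<rfloor> = k \<and> x \<le> \<phi> s}"
    for n k :: nat
  have [measurable]: "D n k \<in> sets borel" for n k
    by (rule real_interval_borel_measurable) (auto simp: is_interval_1 D_def intro: order_trans)
  have "{\<omega> \<in> space M. hit_time (\<lambda>s \<omega>. X0 \<omega> + Bh h Y s \<omega> - \<phi> s) \<omega> \<le> ereal t} =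
        {\<omega> \<in> space M. \<forall>n. \<exists>k. X0 \<omega> + walk h Y k \<omega> \<in> D n k}"
    by (auto simp: hit_time_le_iff D_def Bh_eq_walk)
  also have "\<dots> \<in> sets M" by measurable
  finally show ?thesis .
qed

definition grid_hit_event :: "(ereal \<Rightarrow> real) \<Rightarrow> nat \<Rightarrow> 'a set" where
  "grid_hit_event l K = {\<omega> \<in> space M. \<exists>j\<le>K. X0 \<omega> + walk h Y j \<omega> \<le> \<alpha> * l (ereal (h * real j))}"

lemma grid_hit_event_measurable[measurable]: "grid_hit_event l K \<in> sets M"
  unfolding grid_hit_event_def by measurable

lemma grid_hit_event_mono:
  assumes "K \<le> K'" and "\<And>t. l t \<le> l' t"
  shows "grid_hit_event l K \<subseteq> grid_hit_event l' K'"
proof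
  fix \<omega> assume "\<omega> \<in> grid_hit_event l K"
  then obtain j where "\<omega> \<in> space M" "j \<le> K" "X0 \<omega> + walk h Y j \<omega> \<le> \<alpha> * l (ereal (h * real j))"
    by (auto simp: grid_hit_event_def)
  moreover have "\<alpha> * l (ereal (h * real j)) \<le> \<alpha> * l' (ereal (h * real j))"
    using assms(2) \<alpha>_nonneg by (rule mult_left_mono)
  ultimately show "\<omega> \<in> grid_hit_event l' K'"
    using assms(1) unfolding grid_hit_event_def by (auto intro!: exI[of _ j])
qed

lemma Gamma_eq_grid_hit_event:
  assumes "0 \<le> t"
  shows "\<Gamma> l (ereal t) = prob (grid_hit_event l (nat \<lfloor>t / h\<rfloor>))"
proof -
  have "hit_time (\<lambda>s \<omega>. X0 \<omega> + Bh h Y s \<omega> - \<alpha> * l (ereal (h * of_int \<lfloor>s / h\<rfloor>))) \<omega> \<le> ereal t \<longleftrightarrow>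
        (\<exists>j\<le>nat \<lfloor>t / h\<rfloor>. X0 \<omega> + walk h Y j \<omega> \<le> \<alpha> * l (ereal (h * real j)))" for \<omega>
    using h_pos by (intro hit_time_grid_iff assms) auto
  then show ?thesis using assms by (simp add: Gamma_h_def grid_hit_event_def)
qed

lemma Gamma_neg: "t < 0 \<Longrightarrow> \<Gamma> l t = 0"
  by (simp add: Gamma_h_def)

lemma Gamma_infty: "\<Gamma> l \<infinity> = 1"
  by (simp add: Gamma_h_def)

lemma Gamma_nonneg: "0 \<le> \<Gamma> l t"
  and Gamma_le_1: "\<Gamma> l t \<le> 1"
  by (cases t rule: ereal_nonneg_cases; simp add: Gamma_neg Gamma_infty Gamma_eq_grid_hit_event)+

lemma Gamma_mono:
  assumes "\<And>t. l t \<le> l' t"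
  shows "\<Gamma> l t \<le> \<Gamma> l' t"
proof (cases t rule: ereal_nonneg_cases)
  case (3 r)
  then show ?thesis using assms
    by (simp add: Gamma_eq_grid_hit_event finite_measure_mono grid_hit_event_mono)
qed (simp_all add: Gamma_neg Gamma_infty)

lemma mono_Gamma_time: "mono (\<Gamma> l)"
proof
  fix t t' :: ereal assume "t \<le> t'"
  show "\<Gamma> l t \<le> \<Gamma> l t'"
  proof (cases t rule: ereal_nonneg_cases)
    case 1 then show ?thesis by (simp add: Gamma_neg Gamma_nonneg)
  next
    case 2 then show ?thesis using \<open>t \<le> t'\<close> by simp
  next
    case (3 r)
    with \<open>t \<le> t'\<close> show ?thesis
    proof (cases t' rule: ereal_nonneg_cases)
      case (3 r')
      with \<open>t = ereal r\<close> \<open>t \<le> t'\<close> h_pos have "nat \<lfloor>r / h\<rfloor> \<le> nat \<lfloor>r' / h\<rfloor>"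
        by (auto intro!: nat_mono floor_mono divide_right_mono)
      with \<open>t = ereal r\<close> \<open>0 \<le> r\<close> 3 show ?thesis
        by (simp add: Gamma_eq_grid_hit_event finite_measure_mono grid_hit_event_mono)
    next
      case 1
      with \<open>t \<le> t'\<close> \<open>t = ereal r\<close> \<open>0 \<le> r\<close> show ?thesis
        by (metis ereal_less_eq(3) order.trans not_le zero_ereal_def)
    qed (simp add: Gamma_infty Gamma_le_1)
  qed
qed

lemma Gamma_at_grid_floor:
  assumes "0 \<le> t"
  shows "\<Gamma> l (ereal (h * of_int \<lfloor>t / h\<rfloor>)) = \<Gamma> l (ereal t)"
  using assms h_pos by (simp add: Gamma_eq_grid_hit_event)

lemma Gamma_continuous_at_right: "continuous (at_right t) (\<Gamma> l)"
proof (cases t rule: ereal_nonneg_cases)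
  case 1
  then have "eventually (\<lambda>u. \<Gamma> l u = \<Gamma> l t) (at_right t)"
    by (intro eventually_at_rightI[of t 0]) (auto simp: Gamma_neg)
  then show ?thesis unfolding continuous_within by (rule tendsto_eventually)
next
  case 2
  then have "at_right t = bot"
    using trivial_limit_at_right_top[where 'a = ereal] by (simp add: top_ereal_def)
  then show ?thesis by simp
next
  case (3 r)
  define K where "K = nat \<lfloor>r / h\<rfloor>"
  have "r < h * real (Suc K)" and "h * real K \<le> r"
    using grid_le_iff[OF h_pos \<open>0 \<le> r\<close>, of "Suc K"] grid_le_iff[OF h_pos \<open>0 \<le> r\<close>, of K]
    by (auto simp: K_def)
  moreover have "\<Gamma> l u = \<Gamma> l t" if "u \<in> {t<..<ereal (h * real (Suc K))}" for u
  proof -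
    from that 3 obtain v where v: "u = ereal v" "r < v" "v < h * real (Suc K)"
      by (cases u) auto
    with \<open>h * real K \<le> r\<close> \<open>0 \<le> r\<close> have "nat \<lfloor>v / h\<rfloor> = K"
      using grid_le_iff[OF h_pos, of v K] grid_le_iff[OF h_pos, of v "Suc K"] by simp
    with v 3 show ?thesis by (simp add: Gamma_eq_grid_hit_event K_def)
  qed
  ultimately have "eventually (\<lambda>u. \<Gamma> l u = \<Gamma> l t) (at_right t)"
    using 3 by (intro eventually_at_rightI) auto
  then show ?thesis unfolding continuous_within by (rule tendsto_eventually)
qed

lemma in_M_Gamma: "in_M (\<Gamma> l)"
  unfolding in_M_def
  using mono_Gamma_time Gamma_nonneg Gamma_le_1 Gamma_neg Gamma_infty Gamma_continuous_at_right
  by blast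

lemma Gamma_below_solution:
  assumes sol: "donsker_solution M h \<alpha> X0 Y \<Lambda>"
    and below: "\<And>s. 0 \<le> s \<Longrightarrow> \<alpha> * l (ereal s) \<le> \<Lambda> s" and t: "0 \<le> t"
  shows "\<alpha> * \<Gamma> l (ereal t) \<le> \<Lambda> t"
proof -
  let ?E = "{\<omega> \<in> space M. hit_time (\<lambda>s \<omega>. X0 \<omega> + Bh h Y s \<omega> - \<Lambda> s) \<omega> \<le> ereal t}"
  have "grid_hit_event l (nat \<lfloor>t / h\<rfloor>) \<subseteq> ?E"
  proof
    fix \<omega> assume "\<omega> \<in> grid_hit_event l (nat \<lfloor>t / h\<rfloor>)"
    then obtain j where \<omega>: "\<omega> \<in> space M" and j: "j \<le> nat \<lfloor>t / h\<rfloor>"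
      and hit: "X0 \<omega> + walk h Y j \<omega> \<le> \<alpha> * l (ereal (h * real j))"
      by (auto simp: grid_hit_event_def)
    have "hit_time (\<lambda>s \<omega>. X0 \<omega> + Bh h Y s \<omega> - \<Lambda> s) \<omega> \<le> ereal (h * real j)"
      using h_pos hit below[of "h * real j"] by (intro hit_time_le) (auto simp: Bh_eq_walk)
    also have "\<dots> \<le> ereal t" using grid_le_iff[OF h_pos t] j by simp
    finally show "\<omega> \<in> ?E" using \<omega> by simp
  qed
  then have "prob (grid_hit_event l (nat \<lfloor>t / h\<rfloor>)) \<le> prob ?E"
    by (rule finite_measure_mono) (rule hit_event_measurable)
  then show ?thesis
    using sol t \<alpha>_nonneg by (simp add: donsker_solution_def Gamma_eq_grid_hit_event mult_left_mono)
qed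

lemma Gamma_iterates_below_solution:
  assumes sol: "donsker_solution M h \<alpha> X0 Y \<Lambda>" and "0 \<le> t"
  shows "\<alpha> * (\<Gamma> ^^ k) (\<lambda>_. 0) (ereal t) \<le> \<Lambda> t"
  using \<open>0 \<le> t\<close>
proof (induction k arbitrary: t)
  case 0
  then show ?case using sol \<alpha>_nonneg by (simp add: donsker_solution_def)
next
  case (Suc k)
  then show ?case using Gamma_below_solution[OF sol] by simp
qed

lemma Gamma_iterates_incseq: "incseq (\<lambda>k. (\<Gamma> ^^ k) (\<lambda>_. 0) t)"
proof (rule incseq_SucI)
  show "(\<Gamma> ^^ k) (\<lambda>_. 0) t \<le> (\<Gamma> ^^ Suc k) (\<lambda>_. 0) t" for k
  proof (induction k arbitrary: t)
    case 0
    then show ?case by (simp add: Gamma_nonneg)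
  next
    case (Suc k)
    then show ?case by (simp add: Gamma_mono)
  qed
qed

lemma Gamma_iterates_tendsto_SUP:
  "(\<lambda>k. (\<Gamma> ^^ k) (\<lambda>_. 0) t) \<longlonglongrightarrow> (SUP k. (\<Gamma> ^^ k) (\<lambda>_. 0) t)"
proof (rule LIMSEQ_incseq_SUP[OF _ Gamma_iterates_incseq])
  have "(\<Gamma> ^^ k) (\<lambda>_. 0) t \<le> 1" for k
    by (cases k) (simp_all add: Gamma_le_1)
  then show "bdd_above (range (\<lambda>k. (\<Gamma> ^^ k) (\<lambda>_. 0) t))" by (intro bdd_aboveI2)
qed

lemma donsker_solution_of_fixed_point:
  assumes "\<Gamma> L = L"
  shows "donsker_solution M h \<alpha> X0 Y (\<lambda>s. \<alpha> * L (ereal (h * of_int \<lfloor>s / h\<rfloor>)))"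
  unfolding donsker_solution_def
proof (intro allI impI)
  fix t :: real assume "0 \<le> t"
  then have "L (ereal (h * of_int \<lfloor>t / h\<rfloor>)) = \<Gamma> L (ereal t)"
    using Gamma_at_grid_floor[of t L] assms by simp
  with \<open>0 \<le> t\<close> show "\<alpha> * L (ereal (h * of_int \<lfloor>t / h\<rfloor>)) = \<alpha> * prob {\<omega> \<in> space M.
      hit_time (\<lambda>s \<omega>. X0 \<omega> + Bh h Y s \<omega> - \<alpha> * L (ereal (h * of_int \<lfloor>s / h\<rfloor>))) \<omega> \<le> ereal t}"
    by (simp add: Gamma_h_def)
qed

end

locale donsker_grid_atomless = donsker_grid +
  assumes X0_indep_Y: "indep_vars (\<lambda>_. borel) (\<lambda>i. case i of None \<Rightarrow> X0 | Some k \<Rightarrow> Y k)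
      (UNIV :: nat option set)"
    and X0_atomless: "\<And>x. prob {\<omega> \<in> space M. X0 \<omega> = x} = 0"
begin

lemma walk_atomless: "prob {\<omega> \<in> space M. X0 \<omega> + walk h Y k \<omega> = c} = 0"
proof (rule indep_var_add_atomless[OF _ X0_atomless])
  let ?Z = "\<lambda>i. case i of None \<Rightarrow> X0 | Some k \<Rightarrow> Y k"
  have "indep_var borel (?Z None) borel (\<lambda>\<omega>. \<Sum>i\<in>Some ` {..k}. ?Z i \<omega>)"
    by (rule indep_vars_sum) (auto intro: indep_vars_subset[OF X0_indep_Y])
  then have "indep_var borel X0 borel (\<lambda>\<omega>. \<Sum>j\<le>k. Y j \<omega>)"
    by (simp add: sum.reindex)
  then have "indep_var borel (id \<circ> X0) borel ((*) (sqrt h) \<circ> (\<lambda>\<omega>. \<Sum>j\<le>k. Y j \<omega>))"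
    by (rule indep_var_compose) auto
  then show "indep_var borel X0 borel (walk h Y k)"
    by (simp add: comp_def walk_def[abs_def])
qed

lemma prob_grid_boundary_eq_0:
  "prob {\<omega> \<in> space M. \<exists>j\<le>K. X0 \<omega> + walk h Y j \<omega> = \<alpha> * G (ereal (h * real j))} = 0"
proof -
  have "{\<omega> \<in> space M. \<exists>j\<le>K. X0 \<omega> + walk h Y j \<omega> = \<alpha> * G (ereal (h * real j))} =
        (\<Union>j\<le>K. {\<omega> \<in> space M. X0 \<omega> + walk h Y j \<omega> = \<alpha> * G (ereal (h * real j))})"
    by auto
  also have "prob \<dots> \<le> (\<Sum>j\<le>K. prob {\<omega> \<in> space M. X0 \<omega> + walk h Y j \<omega> = \<alpha> * G (ereal (h * real j))})"
    by (rule finite_measure_subadditive_finite) auto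
  also have "\<dots> = 0"
    by (simp add: walk_atomless)
  finally show ?thesis
    by (simp add: measure_le_0_iff)
qed

lemma prob_grid_hit_event_tendsto:
  assumes inc: "\<And>t. incseq (\<lambda>n. l n t)" and lim: "\<And>t. (\<lambda>n. l n t) \<longlonglongrightarrow> G t"
  shows "(\<lambda>n. prob (grid_hit_event (l n) K)) \<longlonglongrightarrow> prob (grid_hit_event G K)"
proof -
  let ?A = "\<lambda>n. grid_hit_event (l n) K" and ?E = "grid_hit_event G K"
  \<comment> \<open>Outside this null set, hitting the limit barrier means crossing it strictly, hence
    crossing some \<open>l n\<close>.\<close>
  let ?N = "{\<omega> \<in> space M. \<exists>j\<le>K. X0 \<omega> + walk h Y j \<omega> = \<alpha> * G (ereal (h * real j))}"
  have "incseq ?A"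
    using inc by (intro incseq_SucI grid_hit_event_mono) (auto simp: incseq_Suc_iff)
  then have "(\<lambda>n. prob (?A n)) \<longlonglongrightarrow> prob (\<Union>n. ?A n)"
    by (intro finite_Lim_measure_incseq) auto
  moreover have "prob (\<Union>n. ?A n) = prob ?E"
  proof (rule antisym)
    have "(\<Union>n. ?A n) \<subseteq> ?E"
      using incseq_le[OF inc lim] by (intro UN_least grid_hit_event_mono) auto
    then show "prob (\<Union>n. ?A n) \<le> prob ?E"
      by (rule finite_measure_mono) measurable
    have "?E \<subseteq> (\<Union>n. ?A n) \<union> ?N"
    proof
      fix \<omega> assume "\<omega> \<in> ?E"
      then obtain j where \<omega>: "\<omega> \<in> space M" and j: "j \<le> K"
        and hit: "X0 \<omega> + walk h Y j \<omega> \<le> \<alpha> * G (ereal (h * real j))"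
        by (auto simp: grid_hit_event_def)
      show "\<omega> \<in> (\<Union>n. ?A n) \<union> ?N"
      proof (cases "X0 \<omega> + walk h Y j \<omega> < \<alpha> * G (ereal (h * real j))")
        case True
        have "(\<lambda>n. \<alpha> * l n (ereal (h * real j))) \<longlonglongrightarrow> \<alpha> * G (ereal (h * real j))"
          by (intro tendsto_mult_left lim)
        from order_tendstoD(1)[OF this True] obtain n
          where "X0 \<omega> + walk h Y j \<omega> < \<alpha> * l n (ereal (h * real j))"
          by (auto simp: eventually_sequentially)
        with \<omega> j have "\<omega> \<in> ?A n"
          by (auto simp: grid_hit_event_def intro!: exI[of _ j])
        then show ?thesis by blast
      next
        case False
        with \<omega> j hit show ?thesis by auto
      qed
    qed
    then have "prob ?E \<le> prob ((\<Union>n. ?A n) \<union> ?N)"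
      by (rule finite_measure_mono) measurable
    also have "\<dots> \<le> prob (\<Union>n. ?A n) + prob ?N"
      by (rule measure_Un_le) measurable
    finally show "prob ?E \<le> prob (\<Union>n. ?A n)"
      by (simp add: prob_grid_boundary_eq_0)
  qed
  ultimately show ?thesis by simp
qed

lemma Gamma_tendsto_incseq:
  assumes "\<And>t. incseq (\<lambda>n. l n t)" and "\<And>t. (\<lambda>n. l n t) \<longlonglongrightarrow> G t"
  shows "(\<lambda>n. \<Gamma> (l n) t) \<longlonglongrightarrow> \<Gamma> G t"
  by (cases t rule: ereal_nonneg_cases)
    (simp_all add: Gamma_neg Gamma_infty Gamma_eq_grid_hit_event prob_grid_hit_event_tendsto[OF assms])

lemma Gamma_iterates_SUP_fixed_point:
  defines "L \<equiv> \<lambda>t. SUP k. (\<Gamma> ^^ k) (\<lambda>_. 0) t"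
  shows "\<Gamma> L = L"
proof
  fix t
  have "(\<lambda>k. (\<Gamma> ^^ Suc k) (\<lambda>_. 0) t) \<longlonglongrightarrow> L t"
    unfolding L_def by (rule LIMSEQ_Suc[OF Gamma_iterates_tendsto_SUP])
  moreover have "(\<lambda>k. (\<Gamma> ^^ Suc k) (\<lambda>_. 0) t) \<longlonglongrightarrow> \<Gamma> L t"
    using Gamma_tendsto_incseq[OF Gamma_iterates_incseq Gamma_iterates_tendsto_SUP]
    by (simp add: L_def)
  ultimately show "\<Gamma> L t = L t"
    using LIMSEQ_unique by metis
qed

end

theorem lemma3p1:
  fixes M :: "'a measure" and h \<alpha> :: real and X0 :: "'a \<Rightarrow> real"
    and Y :: "nat \<Rightarrow> 'a \<Rightarrow> real" and \<Lambda> :: "real \<Rightarrow> real"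
  assumes "prob_space M"
    and "\<alpha> > 0" and "h > 0"
    and "\<And>k. Y k \<in> borel_measurable M"
    and "prob_space.indep_vars M (\<lambda>_. borel) Y UNIV"
    and "\<And>k. distr M borel (Y k) = distr M borel (Y 0)"
    and "integrable M (Y 0)" and "integral\<^sup>L M (Y 0) = 0"
    and "integrable M (\<lambda>\<omega>. (Y 0 \<omega>)\<^sup>2)" and "integral\<^sup>L M (\<lambda>\<omega>. (Y 0 \<omega>)\<^sup>2) = 1"
    and "X0 \<in> borel_measurable M"
    and "prob_space.indep_vars M (\<lambda>_. borel) (\<lambda>i. case i of None \<Rightarrow> X0 | Some k \<Rightarrow> Y k) (UNIV :: nat option set)"
    and "\<And>x. measure M {\<omega> \<in> space M. X0 \<omega> = x} = 0"
    and "minimal_donsker_solution M h \<alpha> X0 Y \<Lambda>"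
  shows "\<exists>L. in_M L \<and> conv_M (\<lambda>k. (Gamma_h M h \<alpha> X0 Y ^^ k) (\<lambda>_. 0)) L \<and>
           (\<forall>t\<ge>0. \<Lambda> t = \<alpha> * L (ereal t))"
proof -
  interpret donsker_grid_atomless M h \<alpha> X0 Y
    using assms(1-4,11-13)
    by (simp add: donsker_grid_atomless_def donsker_grid_atomless_axioms_def
        donsker_grid_def donsker_grid_axioms_def)
  have sol: "donsker_solution M h \<alpha> X0 Y \<Lambda>"
    and min: "\<And>\<Lambda>' t. donsker_solution M h \<alpha> X0 Y \<Lambda>' \<Longrightarrow> 0 \<le> t \<Longrightarrow> \<Lambda> t \<le> \<Lambda>' t"
    using assms(14) by (auto simp: minimal_donsker_solution_def)
  define L where "L t = (SUP k. (\<Gamma> ^^ k) (\<lambda>_. 0) t)" for t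
  have lim: "(\<lambda>k. (\<Gamma> ^^ k) (\<lambda>_. 0) t) \<longlonglongrightarrow> L t" for t
    unfolding L_def by (rule Gamma_iterates_tendsto_SUP)
  have fixed: "\<Gamma> L = L"
    unfolding L_def by (rule Gamma_iterates_SUP_fixed_point)
  have "\<Lambda> t = \<alpha> * L (ereal t)" if "0 \<le> t" for t
  proof (rule antisym)
    have "\<Lambda> t \<le> \<alpha> * L (ereal (h * of_int \<lfloor>t / h\<rfloor>))"
      using min[OF donsker_solution_of_fixed_point[OF fixed] that] .
    also have "\<dots> = \<alpha> * L (ereal t)"
      using Gamma_at_grid_floor[OF that, of L] fixed by simp
    finally show "\<Lambda> t \<le> \<alpha> * L (ereal t)" .
    show "\<alpha> * L (ereal t) \<le> \<Lambda> t"
      using Gamma_iterates_below_solution[OF sol that]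
      by (intro LIMSEQ_le_const2[OF tendsto_mult_left[OF lim]]) blast
  qed
  moreover have "in_M L"
    using in_M_Gamma[of L] fixed by simp
  moreover have "conv_M (\<lambda>k. (\<Gamma> ^^ k) (\<lambda>_. 0)) L"
    using lim by (simp add: conv_M_def)
  ultimately show ?thesis by blast
qed

end
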